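(* Let $(\mathfrak{A},\varphi,\tau)$ be a $*$-dynamical system and let $(\mathfrak{G},\pi,\Omega)$ be any cyclic representation of $(\mathfrak{A},\varphi)$. Let $\iota:\mathfrak{A}\to\mathfrak{G}$, $\iota(A)=\pi(A)\Omega$, and let $U_0:\mathfrak{G}\to\mathfrak{G}$ be the (well-defined, linear, norm at most $1$) operator $U_0\iota(A)=\iota(\tau(A))$. Let $U:\mathfrak{H}\to\mathfrak{H}$ be the bounded linear extension of $U_0$ to the completion $\mathfrak{H}$ of $\mathfrak{G}$, and let $P$ be the orthogonal projection of $\mathfrak{H}$ onto the subspace of fixed points of $U$. Then $(\mathfrak{A},\varphi,\tau)$ is ergodic if and only if $P=\Omega\otimes\Omega$, i.e. if and only if the fixed points of $U$ form a one-dimensional subspace of $\mathfrak{H}$.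
   Context: All algebras are over $\mathbb{C}$. A state on a unital $*$-algebra $\mathfrak{A}$ is a linear functional $\varphi$ with $\varphi(A^*A)\ge0$ for all $A$ and $\varphi(1)=1$. A $*$-dynamical system is a triple $(\mathfrak{A},\varphi,\tau)$ with $\mathfrak{A}$ a unital $*$-algebra, $\varphi$ a state, and $\tau:\mathfrak{A}\to\mathfrak{A}$ linear with $\tau(1)=1$ and $\varphi(\tau(A)^*\tau(A))\le\varphi(A^*A)$ for all $A$. Let $\|A\|_\varphi=\sqrt{\varphi(A^*A)}$, and identify $\alpha\in\mathbb{C}$ with $\alpha1$. The system is ergodic if for every sequence $(A_n)$ in $\mathfrak{A}$ with $\|\tau(A_n)-A_n\|_\varphi\to0$ which is Cauchy for $\|\cdot\|_\varphi$ (for every $\varepsilon>0$ there is $N$ with $\|A_m-A_n\|_\varphi\le\varepsilon$ for $m,n>N$), there is $\alpha\in\mathbb{C}$ with $\|A_n-\alpha\|_\varphi\to0$. A cyclic representation of $(\mathfrak{A},\varphi)$ is a triple $(\mathfrak{G},\pi,\Omega)$ with $\mathfrak{G}$ an inner product space, $\pi:\mathfrak{A}\to L(\mathfrak{G})$ (linear operators on $\mathfrak{G}$) linear with $\pi(1)=1$ and $\pi(AB)=\pi(A)\pi(B)$, $\Omega\in\mathfrak{G}$, $\pi(\mathfrak{A})\Omega=\mathfrak{G}$, and $\langle\pi(A)\Omega,\pi(B)\Omega\rangle=\varphi(A^*B)$ for all $A,B$. Inner products are linear in the second argument; for $x,y\in\mathfrak{H}$, $x\otimes y$ denotes the operator $z\mapsto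 x\langle y,z\rangle$. *)

theory Defs
  imports Complex_Main "HOL-Library.Complex_Order"
begin

definition star_algebra :: "(complex \<Rightarrow> 'a::ring_1 \<Rightarrow> 'a) \<Rightarrow> ('a \<Rightarrow> 'a) \<Rightarrow> bool" where
  "star_algebra sm st \<longleftrightarrow>
     vector_space sm \<and>
     (\<forall>c x y. sm c (x * y) = sm c x * y \<and> sm c (x * y) = x * sm c y) \<and>
     (\<forall>x. st (st x) = x) \<and>
     (\<forall>x y. st (x + y) = st x + st y) \<and>
     (\<forall>c x. st (sm c x) = sm (cnj c) (st x)) \<and>
     (\<forall>x y. st (x * y) = st y * st x)"

definition is_state :: "(complex \<Rightarrow> 'a::ring_1 \<Rightarrow> 'a) \<Rightarrow> ('a \<Rightarrow> 'a) \<Rightarrow> ('a \<Rightarrow> complex) \<Rightarrow> bool" where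
  "is_state sm st \<phi> \<longleftrightarrow>
     (\<forall>x y. \<phi> (x + y) = \<phi> x + \<phi> y) \<and> (\<forall>c x. \<phi> (sm c x) = c * \<phi> x) \<and>
     (\<forall>A. 0 \<le> \<phi> (st A * A)) \<and> \<phi> 1 = 1"

definition star_dyn_system ::
  "(complex \<Rightarrow> 'a::ring_1 \<Rightarrow> 'a) \<Rightarrow> ('a \<Rightarrow> 'a) \<Rightarrow> ('a \<Rightarrow> complex) \<Rightarrow> ('a \<Rightarrow> 'a) \<Rightarrow> bool" where
  "star_dyn_system sm st \<phi> \<tau> \<longleftrightarrow>
     star_algebra sm st \<and> is_state sm st \<phi> \<and>
     (\<forall>x y. \<tau> (x + y) = \<tau> x + \<tau> y) \<and> (\<forall>c x. \<tau> (sm c x) = sm c (\<tau> x)) \<and>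
     \<tau> 1 = 1 \<and>
     (\<forall>A. \<phi> (st (\<tau> A) * \<tau> A) \<le> \<phi> (st A * A))"

definition phi_norm :: "('a::ring_1 \<Rightarrow> 'a) \<Rightarrow> ('a \<Rightarrow> complex) \<Rightarrow> 'a \<Rightarrow> real" where
  "phi_norm st \<phi> A = sqrt (Re (\<phi> (st A * A)))"

definition ergodic ::
  "(complex \<Rightarrow> 'a::ring_1 \<Rightarrow> 'a) \<Rightarrow> ('a \<Rightarrow> 'a) \<Rightarrow> ('a \<Rightarrow> complex) \<Rightarrow> ('a \<Rightarrow> 'a) \<Rightarrow> bool" where
  "ergodic sm st \<phi> \<tau> \<longleftrightarrow>
     (\<forall>An :: nat \<Rightarrow> 'a.
        ((\<lambda>n. phi_norm st \<phi> (\<tau> (An n) - An n)) \<longlonglongrightarrow> 0) \<and>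
        (\<forall>\<epsilon>>0. \<exists>N. \<forall>m n. m > N \<and> n > N \<longrightarrow> phi_norm st \<phi> (An m - An n) \<le> \<epsilon>)
        \<longrightarrow> (\<exists>\<alpha>::complex. (\<lambda>n. phi_norm st \<phi> (An n - sm \<alpha> 1)) \<longlonglongrightarrow> 0))"

text \<open>A complex inner product space structure on the type 'h (inner product linear in
  the second argument).\<close>
definition cinner_space :: "(complex \<Rightarrow> 'h::ab_group_add \<Rightarrow> 'h) \<Rightarrow> ('h \<Rightarrow> 'h \<Rightarrow> complex) \<Rightarrow> bool" where
  "cinner_space sm ip \<longleftrightarrow>
     vector_space sm \<and>
     (\<forall>x y z. ip x (y + z) = ip x y + ip x z) \<and>
     (\<forall>c x y. ip x (sm c y) = c * ip x y) \<and>
     (\<forall>x y. ip y x = cnj (ip x y)) \<and>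
     (\<forall>x. 0 \<le> ip x x) \<and>
     (\<forall>x. ip x x = 0 \<longrightarrow> x = 0)"

definition inorm :: "('h \<Rightarrow> 'h \<Rightarrow> complex) \<Rightarrow> 'h \<Rightarrow> real" where
  "inorm ip x = sqrt (Re (ip x x))"

definition icomplete :: "('h::ab_group_add \<Rightarrow> 'h \<Rightarrow> complex) \<Rightarrow> bool" where
  "icomplete ip \<longleftrightarrow>
     (\<forall>x :: nat \<Rightarrow> 'h. (\<forall>\<epsilon>>0. \<exists>N. \<forall>m n. m > N \<and> n > N \<longrightarrow> inorm ip (x m - x n) \<le> \<epsilon>)
        \<longrightarrow> (\<exists>l. (\<lambda>n. inorm ip (x n - l)) \<longlonglongrightarrow> 0))"

definition is_completion_of ::
  "(complex \<Rightarrow> 'h::ab_group_add \<Rightarrow> 'h) \<Rightarrow> ('h \<Rightarrow> 'h \<Rightarrow> complex) \<Rightarrow> 'h set \<Rightarrow> bool" where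
  "is_completion_of sm ip G \<longleftrightarrow>
     cinner_space sm ip \<and> 0 \<in> G \<and>
     (\<forall>x\<in>G. \<forall>y\<in>G. x + y \<in> G) \<and> (\<forall>c. \<forall>x\<in>G. sm c x \<in> G) \<and>
     icomplete ip \<and>
     (\<forall>x. \<forall>\<epsilon>>0. \<exists>g\<in>G. inorm ip (x - g) < \<epsilon>)"

text \<open>Cyclic representation (G, \<pi>, \<Omega>) of (A, \<phi>) on the inner product space G (a subspace of
  'h carrying the restricted inner product); each \<pi> A is a linear operator on G.\<close>
definition cyclic_rep ::
  "(complex \<Rightarrow> 'a::ring_1 \<Rightarrow> 'a) \<Rightarrow> ('a \<Rightarrow> 'a) \<Rightarrow> ('a \<Rightarrow> complex) \<Rightarrow>
   (complex \<Rightarrow> 'h::ab_group_add \<Rightarrow> 'h) \<Rightarrow> ('h \<Rightarrow> 'h \<Rightarrow> complex) \<Rightarrow>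
   'h set \<Rightarrow> ('a \<Rightarrow> 'h \<Rightarrow> 'h) \<Rightarrow> 'h \<Rightarrow> bool" where
  "cyclic_rep smA st \<phi> smH ip G \<pi> \<Omega> \<longleftrightarrow>
     (\<forall>A. \<forall>x\<in>G. \<pi> A x \<in> G) \<and>
     (\<forall>A. \<forall>x\<in>G. \<forall>y\<in>G. \<pi> A (x + y) = \<pi> A x + \<pi> A y) \<and>
     (\<forall>A c. \<forall>x\<in>G. \<pi> A (smH c x) = smH c (\<pi> A x)) \<and>
     (\<forall>A B. \<forall>x\<in>G. \<pi> (A + B) x = \<pi> A x + \<pi> B x) \<and>
     (\<forall>A c. \<forall>x\<in>G. \<pi> (smA c A) x = smH c (\<pi> A x)) \<and>
     (\<forall>x\<in>G. \<pi> 1 x = x) \<and>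
     (\<forall>A B. \<forall>x\<in>G. \<pi> (A * B) x = \<pi> A (\<pi> B x)) \<and>
     \<Omega> \<in> G \<and>
     G = (\<lambda>A. \<pi> A \<Omega>) ` UNIV \<and>
     (\<forall>A B. ip (\<pi> A \<Omega>) (\<pi> B \<Omega>) = \<phi> (st A * B))"

end

theory Submission
  imports Defs
begin

text \<open>Via \<open>\<iota> A = \<pi> A \<Omega>\<close> the seminorm \<open>\<parallel>A\<parallel>\<^sub>\<phi>\<close> becomes the norm of \<open>\<iota> A\<close> and \<open>\<tau>\<close> becomes \<open>U\<close>,
  so ergodicity says: every Cauchy sequence in the dense subspace \<open>G\<close> that is asymptotically
  \<open>U\<close>-invariant converges to a multiple of \<open>\<Omega>\<close>. By completeness and boundedness of \<open>U\<close> such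
  sequences converge precisely to \<open>U\<close>-fixed vectors, and by density every fixed vector is such a
  limit; so ergodicity means that the fixed space of \<open>U\<close> is \<open>\<complex>\<Omega>\<close>. Since \<open>U \<Omega> = \<Omega>\<close> and
  \<open>\<langle>\<Omega>, \<Omega>\<rangle> = 1\<close>, this is the same as \<open>P = \<Omega> \<otimes> \<Omega>\<close>.\<close>

lemma tendsto_zero_squeeze:
  fixes f g :: "nat \<Rightarrow> real"
  assumes "\<And>n. 0 \<le> f n" "\<And>n. f n \<le> g n" "g \<longlonglongrightarrow> 0"
  shows "f \<longlonglongrightarrow> 0"
  by (rule tendsto_sandwich[of "\<lambda>_. 0" f sequentially g]) (use assms in auto)

definition icauchy :: "('h::ab_group_add \<Rightarrow> 'h \<Rightarrow> complex) \<Rightarrow> (nat \<Rightarrow> 'h) \<Rightarrow> bool" where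
  "icauchy ip x \<longleftrightarrow> (\<forall>\<epsilon>>0. \<exists>N. \<forall>m n. m > N \<and> n > N \<longrightarrow> inorm ip (x m - x n) \<le> \<epsilon>)"

lemma icomplete_iff_icauchy:
  "icomplete ip \<longleftrightarrow> (\<forall>x. icauchy ip x \<longrightarrow> (\<exists>l. (\<lambda>n. inorm ip (x n - l)) \<longlonglongrightarrow> 0))"
  unfolding icomplete_def icauchy_def ..

locale inner_space =
  fixes sm :: "complex \<Rightarrow> 'h::ab_group_add \<Rightarrow> 'h" and ip :: "'h \<Rightarrow> 'h \<Rightarrow> complex"
  assumes cinner_space: "cinner_space sm ip"
begin

lemma ip_add_right: "ip x (y + z) = ip x y + ip x z"
  using cinner_space unfolding cinner_space_def by blast

lemma ip_scale_right: "ip x (sm c y) = c * ip x y"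
  using cinner_space unfolding cinner_space_def by blast

lemma ip_cnj_commute: "ip y x = cnj (ip x y)"
  using cinner_space unfolding cinner_space_def by blast

lemma ip_self_nonneg: "0 \<le> ip x x"
  using cinner_space unfolding cinner_space_def by blast

lemma ip_self_eq_0: "ip x x = 0 \<Longrightarrow> x = 0"
  using cinner_space unfolding cinner_space_def by blast

lemma ip_zero_right: "ip x 0 = 0"
  using ip_add_right[of x 0 0] by simp

lemma ip_minus_right: "ip x (- y) = - ip x y"
  using ip_add_right[of x y "- y"] ip_zero_right by (simp add: add_eq_0_iff2)

lemma ip_diff_right: "ip x (y - z) = ip x y - ip x z"
  using ip_add_right[of x y "- z"] ip_minus_right by simp

lemma ip_add_left: "ip (y + z) x = ip y x + ip z x"
  using ip_cnj_commute[of "y + z" x] ip_cnj_commute[of y x] ip_cnj_commute[of z x] ip_add_right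
  by simp

lemma ip_minus_left: "ip (- y) x = - ip y x"
  using ip_cnj_commute[of "- y" x] ip_cnj_commute[of y x] ip_minus_right by simp

lemma ip_diff_left: "ip (y - z) x = ip y x - ip z x"
  using ip_add_left[of y "- z"] ip_minus_left by simp

definition sqnorm :: "'h \<Rightarrow> real" where
  "sqnorm x = Re (ip x x)"

lemma ip_self_eq_sqnorm: "ip x x = complex_of_real (sqnorm x)"
  using ip_self_nonneg[of x] unfolding sqnorm_def by (simp add: complex_eq_iff less_eq_complex_def)

lemma sqnorm_nonneg: "0 \<le> sqnorm x"
  using ip_self_nonneg[of x] unfolding sqnorm_def by (simp add: less_eq_complex_def)

lemma inorm_eq_sqrt_sqnorm: "inorm ip x = sqrt (sqnorm x)"
  unfolding inorm_def sqnorm_def ..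

lemma inorm_eq_0_iff: "inorm ip x = 0 \<longleftrightarrow> x = 0"
proof -
  have "inorm ip x = 0 \<longleftrightarrow> ip x x = 0"
    by (simp add: inorm_eq_sqrt_sqnorm ip_self_eq_sqnorm)
  also have "\<dots> \<longleftrightarrow> x = 0"
    using ip_self_eq_0 ip_zero_right by blast
  finally show ?thesis .
qed

lemma inorm_minus_commute: "inorm ip (x - y) = inorm ip (y - x)"
proof -
  have "ip (- z) (- z) = ip z z" for z
    by (simp add: ip_minus_left ip_minus_right)
  from this[of "y - x"] show ?thesis
    by (simp add: inorm_def)
qed

lemma sqnorm_parallelogram: "sqnorm (a + b) + sqnorm (a - b) = 2 * sqnorm a + 2 * sqnorm b"
proof -
  have "ip (a + b) (a + b) + ip (a - b) (a - b) = 2 * ip a a + 2 * ip b b"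
    by (simp add: ip_add_left ip_add_right ip_diff_left ip_diff_right algebra_simps)
  then have "complex_of_real (sqnorm (a + b) + sqnorm (a - b)) =
      complex_of_real (2 * sqnorm a + 2 * sqnorm b)"
    by (simp add: ip_self_eq_sqnorm)
  then show ?thesis
    by (simp only: of_real_eq_iff)
qed

lemma sqnorm_diff_triangle: "sqnorm (a - c) \<le> 2 * sqnorm (a - b) + 2 * sqnorm (b - c)"
  using sqnorm_parallelogram[of "a - b" "b - c"] sqnorm_nonneg[of "(a - b) - (b - c)"] by simp

lemma tendsto_inorm_iff_sqnorm:
  "(\<lambda>n. inorm ip (x n)) \<longlonglongrightarrow> 0 \<longleftrightarrow> (\<lambda>n. sqnorm (x n)) \<longlonglongrightarrow> 0"
proof
  assume "(\<lambda>n. inorm ip (x n)) \<longlonglongrightarrow> 0"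
  from tendsto_power[OF this, of 2] show "(\<lambda>n. sqnorm (x n)) \<longlonglongrightarrow> 0"
    by (simp add: inorm_eq_sqrt_sqnorm sqnorm_nonneg)
next
  assume "(\<lambda>n. sqnorm (x n)) \<longlonglongrightarrow> 0"
  from tendsto_real_sqrt[OF this] show "(\<lambda>n. inorm ip (x n)) \<longlonglongrightarrow> 0"
    by (simp add: inorm_eq_sqrt_sqnorm)
qed

lemma tendsto_inorm_diff_trans:
  assumes "(\<lambda>n. inorm ip (x n - y n)) \<longlonglongrightarrow> 0" "(\<lambda>n. inorm ip (y n - z n)) \<longlonglongrightarrow> 0"
  shows "(\<lambda>n. inorm ip (x n - z n)) \<longlonglongrightarrow> 0"
proof -
  have "(\<lambda>n. 2 * sqnorm (x n - y n) + 2 * sqnorm (y n - z n)) \<longlonglongrightarrow> 0"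
    using assms by (auto simp: tendsto_inorm_iff_sqnorm intro: tendsto_add_zero tendsto_mult_right_zero)
  then have "(\<lambda>n. sqnorm (x n - z n)) \<longlonglongrightarrow> 0"
    by (rule tendsto_zero_squeeze[OF sqnorm_nonneg sqnorm_diff_triangle])
  then show ?thesis
    by (simp add: tendsto_inorm_iff_sqnorm)
qed

lemma tendsto_inorm_limit_unique:
  assumes "(\<lambda>n. inorm ip (x n - a)) \<longlonglongrightarrow> 0" "(\<lambda>n. inorm ip (x n - b)) \<longlonglongrightarrow> 0"
  shows "a = b"
proof -
  have "(\<lambda>n. inorm ip (a - x n)) \<longlonglongrightarrow> 0"
    using assms(1) by (simp add: inorm_minus_commute)
  from tendsto_inorm_diff_trans[OF this assms(2)] have "inorm ip (a - b) = 0"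
    by (rule LIMSEQ_const_iff[THEN iffD1])
  then show ?thesis
    by (simp add: inorm_eq_0_iff)
qed

lemma tendsto_inorm_imp_icauchy:
  assumes "(\<lambda>n. inorm ip (x n - l)) \<longlonglongrightarrow> 0"
  shows "icauchy ip x"
  unfolding icauchy_def
proof (intro allI impI)
  fix \<epsilon> :: real
  assume "\<epsilon> > 0"
  then have "\<epsilon>\<^sup>2 / 4 > 0" by simp
  moreover have "(\<lambda>n. sqnorm (x n - l)) \<longlonglongrightarrow> 0"
    using assms by (simp add: tendsto_inorm_iff_sqnorm)
  ultimately obtain N where N: "\<And>n. n \<ge> N \<Longrightarrow> sqnorm (x n - l) < \<epsilon>\<^sup>2 / 4"
    using LIMSEQ_D by fastforce
  have "inorm ip (x m - x n) \<le> \<epsilon>" if "m > N" "n > N" for m n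
  proof -
    have "sqnorm (x m - x n) \<le> 2 * sqnorm (x m - l) + 2 * sqnorm (l - x n)"
      by (rule sqnorm_diff_triangle)
    also have "sqnorm (l - x n) = sqnorm (x n - l)"
      using inorm_minus_commute[of l "x n"] sqnorm_nonneg by (simp add: inorm_eq_sqrt_sqnorm)
    finally have "sqnorm (x m - x n) \<le> \<epsilon>\<^sup>2"
      using N[of m] N[of n] that by simp
    then show ?thesis
      using real_sqrt_le_mono \<open>\<epsilon> > 0\<close> by (fastforce simp: inorm_eq_sqrt_sqnorm)
  qed
  then show "\<exists>N. \<forall>m n. m > N \<and> n > N \<longrightarrow> inorm ip (x m - x n) \<le> \<epsilon>"
    by blast
qed

lemma dense_approx_sequence:
  assumes dense: "\<forall>x. \<forall>\<epsilon>>0. \<exists>g\<in>G. inorm ip (x - g) < \<epsilon>"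
  obtains g where "\<And>n. g n \<in> G" "(\<lambda>n. inorm ip (g n - y)) \<longlonglongrightarrow> 0"
proof -
  have "\<forall>n. \<exists>g\<in>G. inorm ip (y - g) < inverse (real (Suc n))"
    using dense by simp
  then obtain g where g: "\<And>n. g n \<in> G" "\<And>n. inorm ip (y - g n) < inverse (real (Suc n))"
    by metis
  have "(\<lambda>n. inorm ip (g n - y)) \<longlonglongrightarrow> 0"
  proof (rule tendsto_zero_squeeze[OF _ _ LIMSEQ_inverse_real_of_nat])
    show "0 \<le> inorm ip (g n - y)" for n
      by (simp add: inorm_eq_sqrt_sqnorm sqnorm_nonneg)
    show "inorm ip (g n - y) \<le> inverse (real (Suc n))" for n
      using g(2)[of n] by (simp add: inorm_minus_commute)
  qed
  with g(1) show ?thesis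
    by (rule that)
qed

lemma projection_fixes_fixed_points:
  assumes "additive U"
    and P_range: "\<forall>x. U (P x) = P x"
    and P_orth: "\<forall>x y. U y = y \<longrightarrow> ip y (x - P x) = 0"
    and "U y = y"
  shows "P y = y"
proof -
  have "U (y - P y) = y - P y"
    using additive.diff[OF \<open>additive U\<close>] \<open>U y = y\<close> P_range by simp
  then have "ip (y - P y) (y - P y) = 0"
    using P_orth by blast
  then show ?thesis
    using ip_self_eq_0[of "y - P y"] by simp
qed

lemma projection_eq_rank_one_iff:
  assumes "additive U"
    and P_range: "\<forall>x. U (P x) = P x"
    and P_orth: "\<forall>x y. U y = y \<longrightarrow> ip y (x - P x) = 0"
    and "U e = e" "ip e e = 1"
  shows "(\<forall>x. P x = sm (ip e x) e) \<longleftrightarrow> (\<forall>y. U y = y \<longrightarrow> y \<in> range (\<lambda>\<alpha>. sm \<alpha> e))"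
proof
  assume P_eq: "\<forall>x. P x = sm (ip e x) e"
  show "\<forall>y. U y = y \<longrightarrow> y \<in> range (\<lambda>\<alpha>. sm \<alpha> e)"
  proof (intro allI impI)
    fix y
    assume "U y = y"
    then have "y = sm (ip e y) e"
      using projection_fixes_fixed_points[OF assms(1-3)] P_eq by metis
    then show "y \<in> range (\<lambda>\<alpha>. sm \<alpha> e)"
      by (rule image_eqI) simp
  qed
next
  assume fixed: "\<forall>y. U y = y \<longrightarrow> y \<in> range (\<lambda>\<alpha>. sm \<alpha> e)"
  show "\<forall>x. P x = sm (ip e x) e"
  proof
    fix x
    obtain \<alpha> where \<alpha>: "P x = sm \<alpha> e"
      using fixed P_range by blast
    have "ip e (x - P x) = 0"
      using P_orth \<open>U e = e\<close> by blast
    then have "ip e x = ip e (P x)"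
      by (simp add: ip_diff_right)
    also have "\<dots> = \<alpha>"
      using \<alpha> \<open>ip e e = 1\<close> by (simp add: ip_scale_right)
    finally show "P x = sm (ip e x) e"
      using \<alpha> by simp
  qed
qed

end

locale bounded_operator = inner_space sm ip
  for sm :: "complex \<Rightarrow> 'h::ab_group_add \<Rightarrow> 'h" and ip +
  fixes U :: "'h \<Rightarrow> 'h"
  assumes additive: "additive U"
    and bounded: "\<exists>C. \<forall>x. inorm ip (U x) \<le> C * inorm ip x"
begin

lemma tendsto_inorm_operator:
  assumes "(\<lambda>n. inorm ip (x n - l)) \<longlonglongrightarrow> 0"
  shows "(\<lambda>n. inorm ip (U (x n) - U l)) \<longlonglongrightarrow> 0"
proof -
  obtain C where C: "\<And>x. inorm ip (U x) \<le> C * inorm ip x"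
    using bounded by blast
  show ?thesis
  proof (rule tendsto_zero_squeeze)
    show "0 \<le> inorm ip (U (x n) - U l)" for n
      by (simp add: inorm_eq_sqrt_sqnorm sqnorm_nonneg)
    show "inorm ip (U (x n) - U l) \<le> C * inorm ip (x n - l)" for n
      using C[of "x n - l"] by (simp add: additive.diff[OF additive])
    show "(\<lambda>n. C * inorm ip (x n - l)) \<longlonglongrightarrow> 0"
      using tendsto_mult_right_zero[OF assms] .
  qed
qed

lemma tendsto_inorm_asymptotically_fixed_iff:
  assumes lim: "(\<lambda>n. inorm ip (x n - l)) \<longlonglongrightarrow> 0"
  shows "(\<lambda>n. inorm ip (U (x n) - x n)) \<longlonglongrightarrow> 0 \<longleftrightarrow> U l = l"
proof
  assume "(\<lambda>n. inorm ip (U (x n) - x n)) \<longlonglongrightarrow> 0"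
  from tendsto_inorm_diff_trans[OF this lim] tendsto_inorm_operator[OF lim] show "U l = l"
    by (rule tendsto_inorm_limit_unique[symmetric])
next
  assume "U l = l"
  have "(\<lambda>n. inorm ip (l - x n)) \<longlonglongrightarrow> 0"
    using lim by (simp add: inorm_minus_commute)
  with tendsto_inorm_operator[OF lim] \<open>U l = l\<close> show "(\<lambda>n. inorm ip (U (x n) - x n)) \<longlonglongrightarrow> 0"
    using tendsto_inorm_diff_trans by simp
qed

lemma asymptotically_fixed_sequences_converge_iff:
  assumes complete: "icomplete ip"
    and dense: "\<forall>x. \<forall>\<epsilon>>0. \<exists>g\<in>G. inorm ip (x - g) < \<epsilon>"
  shows "(\<forall>x. (\<forall>n. x n \<in> G) \<longrightarrow> (\<lambda>n. inorm ip (U (x n) - x n)) \<longlonglongrightarrow> 0 \<longrightarrow> icauchy ip x \<longrightarrow>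
            (\<exists>s\<in>S. (\<lambda>n. inorm ip (x n - s)) \<longlonglongrightarrow> 0))
         \<longleftrightarrow> (\<forall>y. U y = y \<longrightarrow> y \<in> S)"
proof
  assume seq: "\<forall>x. (\<forall>n. x n \<in> G) \<longrightarrow> (\<lambda>n. inorm ip (U (x n) - x n)) \<longlonglongrightarrow> 0 \<longrightarrow> icauchy ip x \<longrightarrow>
                 (\<exists>s\<in>S. (\<lambda>n. inorm ip (x n - s)) \<longlonglongrightarrow> 0)"
  show "\<forall>y. U y = y \<longrightarrow> y \<in> S"
  proof (intro allI impI)
    fix y
    assume "U y = y"
    obtain g where g: "\<And>n. g n \<in> G" "(\<lambda>n. inorm ip (g n - y)) \<longlonglongrightarrow> 0"
      using dense_approx_sequence[OF dense] by blast
    have "icauchy ip g"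
      by (rule tendsto_inorm_imp_icauchy[OF g(2)])
    moreover have "(\<lambda>n. inorm ip (U (g n) - g n)) \<longlonglongrightarrow> 0"
      using tendsto_inorm_asymptotically_fixed_iff[OF g(2)] \<open>U y = y\<close> by simp
    ultimately obtain s where "s \<in> S" "(\<lambda>n. inorm ip (g n - s)) \<longlonglongrightarrow> 0"
      using seq g(1) by blast
    with tendsto_inorm_limit_unique[OF g(2)] show "y \<in> S"
      by blast
  qed
next
  assume fixed: "\<forall>y. U y = y \<longrightarrow> y \<in> S"
  show "\<forall>x. (\<forall>n. x n \<in> G) \<longrightarrow> (\<lambda>n. inorm ip (U (x n) - x n)) \<longlonglongrightarrow> 0 \<longrightarrow> icauchy ip x \<longrightarrow>
          (\<exists>s\<in>S. (\<lambda>n. inorm ip (x n - s)) \<longlonglongrightarrow> 0)"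
  proof (intro allI impI)
    fix x
    assume asym: "(\<lambda>n. inorm ip (U (x n) - x n)) \<longlonglongrightarrow> 0" and "icauchy ip x"
    obtain l where lim: "(\<lambda>n. inorm ip (x n - l)) \<longlonglongrightarrow> 0"
      using complete \<open>icauchy ip x\<close> unfolding icomplete_iff_icauchy by blast
    have "U l = l"
      using tendsto_inorm_asymptotically_fixed_iff[OF lim] asym by simp
    with lim fixed show "\<exists>s\<in>S. (\<lambda>n. inorm ip (x n - s)) \<longlonglongrightarrow> 0"
      by blast
  qed
qed

end

lemma all_sequences_in_range_iff:
  fixes f :: "'a \<Rightarrow> 'b" and Q :: "(nat \<Rightarrow> 'b) \<Rightarrow> bool"
  shows "(\<forall>x. (\<forall>n. x n \<in> range f) \<longrightarrow> Q x) \<longleftrightarrow> (\<forall>A. Q (\<lambda>n. f (A n)))"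
proof
  assume Q_comp: "\<forall>A. Q (\<lambda>n. f (A n))"
  show "\<forall>x. (\<forall>n. x n \<in> range f) \<longrightarrow> Q x"
  proof (intro allI impI)
    fix x :: "nat \<Rightarrow> 'b"
    assume "\<forall>n. x n \<in> range f"
    then have "x = (\<lambda>n. f (inv f (x n)))"
      by (simp add: f_inv_into_f)
    with Q_comp show "Q x"
      by metis
  qed
qed simp

lemma cyclic_rep_range:
  "cyclic_rep smA st \<phi> smH ip G \<pi> \<Omega> \<Longrightarrow> G = range (\<lambda>A. \<pi> A \<Omega>)"
  unfolding cyclic_rep_def by blast

lemma cyclic_rep_one:
  "cyclic_rep smA st \<phi> smH ip G \<pi> \<Omega> \<Longrightarrow> \<pi> 1 \<Omega> = \<Omega>"
  unfolding cyclic_rep_def by blast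

lemma cyclic_rep_diff:
  assumes "cyclic_rep smA st \<phi> smH ip G \<pi> \<Omega>"
  shows "\<pi> (A - B) \<Omega> = \<pi> A \<Omega> - \<pi> B \<Omega>"
proof -
  have "\<pi> (A - B + B) \<Omega> = \<pi> (A - B) \<Omega> + \<pi> B \<Omega>"
    using assms unfolding cyclic_rep_def by blast
  then show ?thesis
    by (simp add: eq_diff_eq)
qed

lemma cyclic_rep_scale_one:
  assumes "cyclic_rep smA st \<phi> smH ip G \<pi> \<Omega>"
  shows "\<pi> (smA c 1) \<Omega> = smH c \<Omega>"
proof -
  have "\<pi> (smA c 1) \<Omega> = smH c (\<pi> 1 \<Omega>)"
    using assms unfolding cyclic_rep_def by blast
  then show ?thesis
    using cyclic_rep_one[OF assms] by simp
qed

lemma cyclic_rep_phi_norm: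
  assumes "cyclic_rep smA st \<phi> smH ip G \<pi> \<Omega>"
  shows "phi_norm st \<phi> A = inorm ip (\<pi> A \<Omega>)"
proof -
  have "ip (\<pi> A \<Omega>) (\<pi> A \<Omega>) = \<phi> (st A * A)"
    using assms unfolding cyclic_rep_def by blast
  then show ?thesis
    by (simp add: phi_norm_def inorm_def)
qed

lemma star_algebra_star_one:
  assumes "star_algebra sm st"
  shows "st 1 = 1"
proof -
  have st_st: "st (st x) = x" and st_mult: "st (x * y) = st y * st x" for x y
    using assms unfolding star_algebra_def by blast+
  have "st 1 = st 1 * st (st 1)"
    by (simp add: st_st)
  also have "\<dots> = st (st 1 * 1)"
    by (rule st_mult[symmetric])
  finally show ?thesis
    by (simp add: st_st)
qed

lemma cyclic_rep_ip_cyclic_vector: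
  assumes "star_algebra smA st" "is_state smA st \<phi>" "cyclic_rep smA st \<phi> smH ip G \<pi> \<Omega>"
  shows "ip \<Omega> \<Omega> = 1"
proof -
  have "ip (\<pi> 1 \<Omega>) (\<pi> 1 \<Omega>) = \<phi> (st 1 * 1)"
    using assms(3) unfolding cyclic_rep_def by blast
  also have "\<dots> = 1"
    using assms(2) star_algebra_star_one[OF assms(1)] unfolding is_state_def by simp
  finally show ?thesis
    using cyclic_rep_one[OF assms(3)] by simp
qed

lemma ergodic_iff_cyclic_rep:
  assumes rep: "cyclic_rep smA st \<phi> smH ip G \<pi> \<Omega>"
    and U_ext: "\<forall>A. U (\<pi> A \<Omega>) = \<pi> (\<tau> A) \<Omega>"
  shows "ergodic smA st \<phi> \<tau> \<longleftrightarrow>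
    (\<forall>x. (\<forall>n. x n \<in> G) \<longrightarrow> (\<lambda>n. inorm ip (U (x n) - x n)) \<longlonglongrightarrow> 0 \<longrightarrow> icauchy ip x \<longrightarrow>
       (\<exists>s\<in>range (\<lambda>\<alpha>. smH \<alpha> \<Omega>). (\<lambda>n. inorm ip (x n - s)) \<longlonglongrightarrow> 0))"
    (is "_ \<longleftrightarrow> (\<forall>x. _ \<longrightarrow> ?ergodic_seq x)")
proof -
  have phi_norm_diff: "phi_norm st \<phi> (A - B) = inorm ip (\<pi> A \<Omega> - \<pi> B \<Omega>)" for A B
    using cyclic_rep_phi_norm[OF rep] cyclic_rep_diff[OF rep] by simp
  have U_ext': "\<pi> (\<tau> A) \<Omega> = U (\<pi> A \<Omega>)" for A
    using U_ext by simp
  have "ergodic smA st \<phi> \<tau> \<longleftrightarrow> (\<forall>A. ?ergodic_seq (\<lambda>n. \<pi> (A n) \<Omega>))"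
    unfolding ergodic_def icauchy_def
    by (simp add: phi_norm_diff U_ext' cyclic_rep_scale_one[OF rep] imp_conjL)
  also have "\<dots> \<longleftrightarrow> (\<forall>x. (\<forall>n. x n \<in> G) \<longrightarrow> ?ergodic_seq x)"
    unfolding cyclic_rep_range[OF rep] by (rule all_sequences_in_range_iff[symmetric])
  finally show ?thesis .
qed

theorem proposition2p4:
  fixes smA :: "complex \<Rightarrow> 'a::ring_1 \<Rightarrow> 'a"
    and st :: "'a \<Rightarrow> 'a"
    and \<phi> :: "'a \<Rightarrow> complex"
    and \<tau> :: "'a \<Rightarrow> 'a"
    and smH :: "complex \<Rightarrow> 'h::ab_group_add \<Rightarrow> 'h"
    and ip :: "'h \<Rightarrow> 'h \<Rightarrow> complex"
    and G :: "'h set"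
    and \<pi> :: "'a \<Rightarrow> 'h \<Rightarrow> 'h"
    and \<Omega> :: 'h
    and U P :: "'h \<Rightarrow> 'h"
  assumes sys: "star_dyn_system smA st \<phi> \<tau>"
    and compl: "is_completion_of smH ip G"
    and rep: "cyclic_rep smA st \<phi> smH ip G \<pi> \<Omega>"
    and U_add: "\<forall>x y. U (x + y) = U x + U y"
    and U_hom: "\<forall>c x. U (smH c x) = smH c (U x)"
    and U_bdd: "\<exists>C. \<forall>x. inorm ip (U x) \<le> C * inorm ip x"
    and U_ext: "\<forall>A. U (\<pi> A \<Omega>) = \<pi> (\<tau> A) \<Omega>"
    and P_range: "\<forall>x. U (P x) = P x"
    and P_orth: "\<forall>x y. U y = y \<longrightarrow> ip y (x - P x) = 0"
  shows "ergodic smA st \<phi> \<tau> \<longleftrightarrow> (\<forall>x. P x = smH (ip \<Omega> x) \<Omega>)"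
proof -
  have complete: "icomplete ip" and dense: "\<forall>x. \<forall>\<epsilon>>0. \<exists>g\<in>G. inorm ip (x - g) < \<epsilon>"
    using compl unfolding is_completion_of_def by blast+
  have "cinner_space smH ip"
    using compl unfolding is_completion_of_def by blast
  then interpret bounded_operator smH ip U
    by unfold_locales (use U_add U_bdd in auto)
  have "star_algebra smA st" "is_state smA st \<phi>" "\<tau> 1 = 1"
    using sys unfolding star_dyn_system_def by blast+
  then have "U \<Omega> = \<Omega>" "ip \<Omega> \<Omega> = 1"
    using U_ext cyclic_rep_one[OF rep] cyclic_rep_ip_cyclic_vector[OF _ _ rep] by metis+
  have "ergodic smA st \<phi> \<tau> \<longleftrightarrow>
    (\<forall>x. (\<forall>n. x n \<in> G) \<longrightarrow> (\<lambda>n. inorm ip (U (x n) - x n)) \<longlonglongrightarrow> 0 \<longrightarrow> icauchy ip x \<longrightarrow>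
       (\<exists>s\<in>range (\<lambda>\<alpha>. smH \<alpha> \<Omega>). (\<lambda>n. inorm ip (x n - s)) \<longlonglongrightarrow> 0))"
    by (rule ergodic_iff_cyclic_rep[OF rep U_ext])
  also have "\<dots> \<longleftrightarrow> (\<forall>y. U y = y \<longrightarrow> y \<in> range (\<lambda>\<alpha>. smH \<alpha> \<Omega>))"
    by (rule asymptotically_fixed_sequences_converge_iff[OF complete dense])
  also have "\<dots> \<longleftrightarrow> (\<forall>x. P x = smH (ip \<Omega> x) \<Omega>)"
    by (rule projection_eq_rank_one_iff[OF additive P_range P_orth \<open>U \<Omega> = \<Omega>\<close> \<open>ip \<Omega> \<Omega> = 1\<close>,
          symmetric])
  finally show ?thesis .
qed

end
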